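(* Let $(X,\le)$ be a poset and $E$ an equivalence relation on $X$ with ${\le}\subseteq E$. Let $\alpha:X\to X$ be an order automorphism of $(X,\le)$ and $\beta:X\to X$ a self-inverse dual order automorphism of $(X,\le)$ such that $\alpha,\beta\subseteq E$ and $\beta=\alpha\circ\beta\circ\alpha$. Set $1={\le}$ and $0=\alpha\circ({\le}^c)^\smile$, and for $R\in\mathsf{Up}(\mathbf E)$ define $R'=\alpha\circ\beta\circ R^c\circ\beta$. Then $\mathbf{Dq}(\mathbf E)=\langle\mathsf{Up}(\mathbf E),\cap,\cup,\circ,1,0,{\sim},-,'\rangle$ is a distributive quasi relation algebra. If $\alpha$ is the identity, then $\mathbf{Dq}(\mathbf E)$ is a cyclic distributive quasi relation algebra.
   Context: For binary relations: converse $R^\smile=\{(x,y)\mid(y,x)\in R\}$; composition $R\circ S=\{(x,y)\mid\exists z\,((x,z)\in R,(z,y)\in S)\}$. Functions are identified with their graphs $\{(x,\gamma(x))\}$. For a poset $(X,\le)$ and an equivalence relation $E\supseteq{\le}$, $E$ is partially ordered by $(u,v)\preceq(x,y)$ iff $x\le u$ and $v\le y$; $\mathbf E=(E,\preceq)$, $\mathsf{Up}(\mathbf E)$ is its set of up-sets. For $R\subseteq E$, $R^c=E\setminus R$. On $\mathsf{Up}(\mathbf E)$: $R\backslash S=(R^\smile\circ S^c)^c$, $R/S=(R^c\circ S^\smile)^c$, ${\sim}R=R\backslash 0$, $-R=0/R$. Order automorphism: bijection with $x\le y\iff\alpha(x)\le\alpha(y)$; dual order automorphism: bijection with $x\le y\iff\beta(y)\le\beta(x)$;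 self-inverse: $\beta\circ\beta=\mathrm{id}_X$. A quasi relation algebra is an algebra $\langle A,\wedge,\vee,\cdot,1,0,{\sim},-,'\rangle$ where $\langle A,\wedge,\vee,\cdot,1\rangle$ with residuals $\backslash,/$ is a residuated lattice, $0\in A$, ${\sim}a=a\backslash0$, $-a=0/a$, ${\sim}{-}a={-}{\sim}a=a$, and $'$ satisfies $a''=a$, $(a\vee b)'=a'\wedge b'$, $({\sim}a)'=-(a')$, $(a\cdot b)'=a'+b'$ where $a+b={\sim}(-b\cdot-a)$. It is distributive if its lattice reduct is distributive, cyclic if ${\sim}a=-a$ for all $a$. *)

theory Defs
  imports Main
begin

definition lat_le :: "('b \<Rightarrow> 'b \<Rightarrow> 'b) \<Rightarrow> 'b \<Rightarrow> 'b \<Rightarrow> bool" where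
  "lat_le meet a b \<longleftrightarrow> meet a b = a"

definition residuated_lattice ::
  "'b set \<Rightarrow> ('b \<Rightarrow> 'b \<Rightarrow> 'b) \<Rightarrow> ('b \<Rightarrow> 'b \<Rightarrow> 'b) \<Rightarrow> ('b \<Rightarrow> 'b \<Rightarrow> 'b) \<Rightarrow> 'b
   \<Rightarrow> ('b \<Rightarrow> 'b \<Rightarrow> 'b) \<Rightarrow> ('b \<Rightarrow> 'b \<Rightarrow> 'b) \<Rightarrow> bool" where
  "residuated_lattice A meet join mult one ldiv rdiv \<longleftrightarrow>
     one \<in> A \<and>
     (\<forall>a\<in>A. \<forall>b\<in>A. meet a b \<in> A \<and> join a b \<in> A \<and> mult a b \<in> A \<and> ldiv a b \<in> A \<and> rdiv a b \<in> A) \<and>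
     \<comment> \<open>lattice\<close>
     (\<forall>a\<in>A. \<forall>b\<in>A. meet a b = meet b a \<and> join a b = join b a) \<and>
     (\<forall>a\<in>A. \<forall>b\<in>A. \<forall>c\<in>A. meet (meet a b) c = meet a (meet b c) \<and> join (join a b) c = join a (join b c)) \<and>
     (\<forall>a\<in>A. \<forall>b\<in>A. meet a (join a b) = a \<and> join a (meet a b) = a) \<and>
     \<comment> \<open>monoid\<close>
     (\<forall>a\<in>A. \<forall>b\<in>A. \<forall>c\<in>A. mult (mult a b) c = mult a (mult b c)) \<and>
     (\<forall>a\<in>A. mult one a = a \<and> mult a one = a) \<and>
     \<comment> \<open>residuation\<close>
     (\<forall>a\<in>A. \<forall>b\<in>A. \<forall>c\<in>A.
        (lat_le meet (mult a b) c \<longleftrightarrow> lat_le meet b (ldiv a c)) \<and>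
        (lat_le meet (mult a b) c \<longleftrightarrow> lat_le meet a (rdiv c b)))"

definition quasi_relation_algebra ::
  "'b set \<Rightarrow> ('b \<Rightarrow> 'b \<Rightarrow> 'b) \<Rightarrow> ('b \<Rightarrow> 'b \<Rightarrow> 'b) \<Rightarrow> ('b \<Rightarrow> 'b \<Rightarrow> 'b) \<Rightarrow> 'b \<Rightarrow> 'b
   \<Rightarrow> ('b \<Rightarrow> 'b) \<Rightarrow> ('b \<Rightarrow> 'b) \<Rightarrow> ('b \<Rightarrow> 'b) \<Rightarrow> bool" where
  "quasi_relation_algebra A meet join mult one zero ng mn pr \<longleftrightarrow>
     (\<exists>ldiv rdiv. residuated_lattice A meet join mult one ldiv rdiv \<and>
        (\<forall>a\<in>A. ng a = ldiv a zero \<and> mn a = rdiv zero a)) \<and>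
     zero \<in> A \<and>
     (\<forall>a\<in>A. ng a \<in> A \<and> mn a \<in> A \<and> pr a \<in> A) \<and>
     (\<forall>a\<in>A. ng (mn a) = a \<and> mn (ng a) = a) \<and>
     (\<forall>a\<in>A. pr (pr a) = a) \<and>
     (\<forall>a\<in>A. \<forall>b\<in>A. pr (join a b) = meet (pr a) (pr b)) \<and>
     (\<forall>a\<in>A. pr (ng a) = mn (pr a)) \<and>
     (\<forall>a\<in>A. \<forall>b\<in>A. pr (mult a b) = ng (mult (mn (pr b)) (mn (pr a))))"
     \<comment> \<open>the last line is (a b)' = a' + b' with x + y = ~(-y \<cdot> -x)\<close>

definition distributive_qra where
  "distributive_qra A meet join mult one zero ng mn pr \<longleftrightarrow>
     quasi_relation_algebra A meet join mult one zero ng mn pr \<and>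
     (\<forall>a\<in>A. \<forall>b\<in>A. \<forall>c\<in>A. meet a (join b c) = join (meet a b) (meet a c))"

definition cyclic_distributive_qra where
  "cyclic_distributive_qra A meet join mult one zero ng mn pr \<longleftrightarrow>
     distributive_qra A meet join mult one zero ng mn pr \<and> (\<forall>a\<in>A. ng a = mn a)"

definition graph :: "'a set \<Rightarrow> ('a \<Rightarrow> 'a) \<Rightarrow> ('a \<times> 'a) set" where
  "graph X f = {(x, f x) | x. x \<in> X}"

definition order_automorphism :: "'a set \<Rightarrow> ('a \<times> 'a) set \<Rightarrow> ('a \<Rightarrow> 'a) \<Rightarrow> bool" where
  "order_automorphism X le f \<longleftrightarrow> bij_betw f X X \<and>
     (\<forall>x\<in>X. \<forall>y\<in>X. (x, y) \<in> le \<longleftrightarrow> (f x, f y) \<in> le)"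

definition dual_order_automorphism :: "'a set \<Rightarrow> ('a \<times> 'a) set \<Rightarrow> ('a \<Rightarrow> 'a) \<Rightarrow> bool" where
  "dual_order_automorphism X le f \<longleftrightarrow> bij_betw f X X \<and>
     (\<forall>x\<in>X. \<forall>y\<in>X. (x, y) \<in> le \<longleftrightarrow> (f y, f x) \<in> le)"

text \<open>(u,v) \<preceq> (x,y) iff x \<le> u and v \<le> y; up-sets of (E,\<preceq>).\<close>
definition Up :: "('a \<times> 'a) set \<Rightarrow> ('a \<times> 'a) set \<Rightarrow> ('a \<times> 'a) set set" where
  "Up le E = {R. R \<subseteq> E \<and>
     (\<forall>u v x y. (u, v) \<in> R \<and> (x, y) \<in> E \<and> (x, u) \<in> le \<and> (v, y) \<in> le \<longrightarrow> (x, y) \<in> R)}"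

definition rldiv :: "('a \<times> 'a) set \<Rightarrow> ('a \<times> 'a) set \<Rightarrow> ('a \<times> 'a) set \<Rightarrow> ('a \<times> 'a) set" where
  "rldiv E R S = E - (R\<inverse> O (E - S))"

definition rrdiv :: "('a \<times> 'a) set \<Rightarrow> ('a \<times> 'a) set \<Rightarrow> ('a \<times> 'a) set \<Rightarrow> ('a \<times> 'a) set" where
  "rrdiv E R S = E - ((E - R) O S\<inverse>)"

definition Dq_zero :: "'a set \<Rightarrow> ('a \<times> 'a) set \<Rightarrow> ('a \<times> 'a) set \<Rightarrow> ('a \<Rightarrow> 'a) \<Rightarrow> ('a \<times> 'a) set" where
  "Dq_zero X le E \<alpha> = graph X \<alpha> O (E - le)\<inverse>"

definition Dq_tilde where
  "Dq_tilde X le E \<alpha> R = rldiv E R (Dq_zero X le E \<alpha>)"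

definition Dq_minus where
  "Dq_minus X le E \<alpha> R = rrdiv E (Dq_zero X le E \<alpha>) R"

definition Dq_prime where
  "Dq_prime X E \<alpha> \<beta> R = graph X \<alpha> O graph X \<beta> O (E - R) O graph X \<beta>"

end

theory Submission
  imports Defs
begin

text \<open>
  Up-sets of \<open>E\<close> are the relations \<open>R \<subseteq> E\<close> with \<open>\<le> \<circ> R \<subseteq> R\<close> and \<open>R \<circ> \<le> \<subseteq> R\<close>, so \<open>\<le>\<close> is a
  two-sided unit for them. For relations inside the equivalence \<open>E\<close> residuation
  \<open>R \<circ> S \<subseteq> T \<longleftrightarrow> S \<subseteq> R\<setminus>T \<longleftrightarrow> R \<subseteq> T/S\<close> holds outright, and residuation together with the unit
  law shows that up-sets are closed under both residuals: this is the residuated lattice.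

  The remaining axioms are checked pointwise: for \<open>(x, y) \<in> E\<close>, membership in \<open>0\<close>, \<open>\<sim>R\<close>,
  \<open>-R\<close> and \<open>R'\<close> means \<open>y \<notle> \<alpha> x\<close>, \<open>(\<alpha>\<inverse> y, x) \<notin> R\<close>, \<open>(y, \<alpha> x) \<notin> R\<close> and \<open>(\<beta> (\<alpha> x), \<beta> y) \<notin> R\<close>.
  From \<open>\<beta> = \<alpha>\<beta>\<alpha>\<close> the map \<open>\<gamma> = \<beta>\<alpha>\<close> is an involution and \<open>\<alpha>\<inverse> = \<beta>\<alpha>\<beta>\<close>. Hence \<open>-(R')\<close> consists
  of the pairs \<open>(x, y) \<in> E\<close> with \<open>(\<gamma> y, \<gamma> x) \<in> R\<close>, the converse of \<open>R\<close> conjugated by \<open>\<gamma>\<close>; it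
  reverses composition, so \<open>(R \<circ> S)' = \<sim>-((R \<circ> S)') = \<sim>(-(S') \<circ> -(R'))\<close>. When \<open>\<alpha>\<close> is the
  identity, \<open>\<sim>R\<close> and \<open>-R\<close> have the same description.
\<close>

lemma lat_le_inter_iff_subset: "lat_le (\<inter>) A B \<longleftrightarrow> A \<subseteq> B"
  unfolding lat_le_def by blast

lemma rldiv_subset: "rldiv E R T \<subseteq> E"
  unfolding rldiv_def by blast

lemma rrdiv_subset: "rrdiv E T S \<subseteq> E"
  unfolding rrdiv_def by blast

lemma relcomp_subset_rldiv_iff:
  assumes "trans E" and "R \<subseteq> E" and "S \<subseteq> E"
  shows "R O S \<subseteq> T \<longleftrightarrow> S \<subseteq> rldiv E R T"
proof
  assume "R O S \<subseteq> T"
  then have "(x, y) \<notin> R\<inverse> O (E - T)" if "(x, y) \<in> S" for x y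
    using that by blast
  then show "S \<subseteq> rldiv E R T"
    using assms(3) unfolding rldiv_def by auto
next
  assume S: "S \<subseteq> rldiv E R T"
  show "R O S \<subseteq> T"
  proof
    fix p assume "p \<in> R O S"
    then obtain x y z where p: "p = (x, z)" and xy: "(x, y) \<in> R" and yz: "(y, z) \<in> S"
      by blast
    have "(x, z) \<in> E"
      using xy yz assms by (meson subsetD transD)
    with xy yz show "p \<in> T"
      using S unfolding p rldiv_def by blast
  qed
qed

lemma relcomp_subset_rrdiv_iff:
  assumes "trans E" and "R \<subseteq> E" and "S \<subseteq> E"
  shows "R O S \<subseteq> T \<longleftrightarrow> R \<subseteq> rrdiv E T S"
proof
  assume "R O S \<subseteq> T"
  then have "(x, y) \<notin> (E - T) O S\<inverse>" if "(x, y) \<in> R" for x y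
    using that by blast
  then show "R \<subseteq> rrdiv E T S"
    using assms(2) unfolding rrdiv_def by auto
next
  assume R: "R \<subseteq> rrdiv E T S"
  show "R O S \<subseteq> T"
  proof
    fix p assume "p \<in> R O S"
    then obtain x y z where p: "p = (x, z)" and xy: "(x, y) \<in> R" and yz: "(y, z) \<in> S"
      by blast
    have "(x, z) \<in> E"
      using xy yz assms by (meson subsetD transD)
    with xy yz show "p \<in> T"
      using R unfolding p rrdiv_def by blast
  qed
qed

lemma in_graph_iff: "(x, y) \<in> graph X f \<longleftrightarrow> x \<in> X \<and> y = f x"
  unfolding graph_def by blast

lemma graph_relcomp_iff: "(x, y) \<in> graph X f O S \<longleftrightarrow> x \<in> X \<and> (f x, y) \<in> S"
  unfolding graph_def by blast

lemma relcomp_graph_iff: "(x, y) \<in> S O graph X f \<longleftrightarrow> (\<exists>z\<in>X. (x, z) \<in> S \<and> y = f z)"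
  unfolding graph_def by blast

locale preorder_in_equiv =
  fixes X :: "'a set" and le E :: "('a \<times> 'a) set"
  assumes preorder: "preorder_on X le"
    and equiv: "equiv X E"
    and le_subset_E: "le \<subseteq> E"
begin

lemma E_subset: "E \<subseteq> X \<times> X"
  using equiv by (rule equiv_type)

lemma trans_E: "trans E"
  using equiv unfolding equiv_def by blast

lemma trans_le: "trans le"
  using preorder unfolding preorder_on_def by blast

lemma refl_le: "x \<in> X \<Longrightarrow> (x, x) \<in> le"
  using preorder unfolding preorder_on_def refl_on_def by blast

lemma relcomp_subset_E: "R \<subseteq> E \<Longrightarrow> S \<subseteq> E \<Longrightarrow> R O S \<subseteq> E"
  using trans_E by (auto dest: transD)

lemma refl_E: "x \<in> X \<Longrightarrow> (x, x) \<in> E"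
  using equiv unfolding equiv_def refl_on_def by blast

lemma E_commute: "(y, x) \<in> E \<longleftrightarrow> (x, y) \<in> E"
  using equiv unfolding equiv_def by (auto dest: symD)

lemma E_in_X: "(x, y) \<in> E \<Longrightarrow> x \<in> X \<and> y \<in> X"
  using E_subset by blast

lemma le_in_X: "(x, y) \<in> le \<Longrightarrow> x \<in> X \<and> y \<in> X"
  using le_subset_E E_subset by blast

lemma subset_E_eqI:
  assumes "A \<subseteq> E" and "B \<subseteq> E"
    and "\<And>x y. x \<in> X \<Longrightarrow> y \<in> X \<Longrightarrow> (x, y) \<in> E \<Longrightarrow> (x, y) \<in> A \<longleftrightarrow> (x, y) \<in> B"
  shows "A = B"
  using assms E_in_X by fast

lemma Up_iff: "R \<in> Up le E \<longleftrightarrow> R \<subseteq> E \<and> le O R \<subseteq> R \<and> R O le \<subseteq> R"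
proof
  assume R: "R \<in> Up le E"
  have "(x, y) \<in> R" if "(x, u) \<in> le" and "(u, v) \<in> R" and "(v, y) \<in> le" for x u v y
  proof -
    have "(x, y) \<in> E"
      using that R le_subset_E relcomp_subset_E[of le R] relcomp_subset_E[of "le O R" le]
      unfolding Up_def by blast
    then show ?thesis
      using that R unfolding Up_def by blast
  qed
  moreover have "(x, x) \<in> le" and "(y, y) \<in> le" if "(x, y) \<in> R" for x y
    using that R E_subset refl_le unfolding Up_def by blast+
  ultimately show "R \<subseteq> E \<and> le O R \<subseteq> R \<and> R O le \<subseteq> R"
    using R unfolding Up_def by blast
qed (auto simp: Up_def)

lemma UpI:
  assumes "R \<subseteq> E"
    and "\<And>x u v y. (x, u) \<in> le \<Longrightarrow> (u, v) \<in> R \<Longrightarrow> (v, y) \<in> le \<Longrightarrow> (x, y) \<in> E \<Longrightarrow> (x, y) \<in> R"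
  shows "R \<in> Up le E"
  using assms unfolding Up_def by blast

lemma Up_le_closed:
  "R \<in> Up le E \<Longrightarrow> (x, u) \<in> le \<Longrightarrow> (u, v) \<in> R \<Longrightarrow> (v, y) \<in> le \<Longrightarrow> (x, y) \<in> R"
  unfolding Up_iff by blast

lemma Up_subset_E: "R \<in> Up le E \<Longrightarrow> R \<subseteq> E"
  by (simp add: Up_iff)

lemma le_relcomp_Up:
  assumes "R \<in> Up le E" shows "le O R = R"
proof
  show "le O R \<subseteq> R" using assms by (simp add: Up_iff)
  show "R \<subseteq> le O R"
    using Up_subset_E[OF assms] E_subset refl_le by blast
qed

lemma Up_relcomp_le:
  assumes "R \<in> Up le E" shows "R O le = R"
proof
  show "R O le \<subseteq> R" using assms by (simp add: Up_iff)
  show "R \<subseteq> R O le"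
    using Up_subset_E[OF assms] E_subset refl_le by blast
qed

lemma le_in_Up: "le \<in> Up le E"
  using le_subset_E trans_le by (auto simp: Up_iff dest: transD)

lemma Int_in_Up: "R \<in> Up le E \<Longrightarrow> S \<in> Up le E \<Longrightarrow> R \<inter> S \<in> Up le E"
  unfolding Up_def by blast

lemma Un_in_Up: "R \<in> Up le E \<Longrightarrow> S \<in> Up le E \<Longrightarrow> R \<union> S \<in> Up le E"
  unfolding Up_def by blast

lemma relcomp_in_Up:
  assumes R: "R \<in> Up le E" and S: "S \<in> Up le E"
  shows "R O S \<in> Up le E"
proof -
  have "R O S \<subseteq> E"
    using Up_subset_E[OF R] Up_subset_E[OF S] by (rule relcomp_subset_E)
  moreover have "le O (R O S) = R O S"
    by (simp add: le_relcomp_Up[OF R] flip: O_assoc)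
  moreover have "(R O S) O le = R O S"
    by (simp add: Up_relcomp_le[OF S] O_assoc)
  ultimately show ?thesis by (simp add: Up_iff)
qed

lemma rldiv_in_Up:
  assumes R: "R \<in> Up le E" and T: "T \<in> Up le E"
  shows "rldiv E R T \<in> Up le E"
proof -
  let ?D = "rldiv E R T"
  have ED: "?D \<subseteq> E" by (rule rldiv_subset)
  have RD: "R O ?D \<subseteq> T"
    using relcomp_subset_rldiv_iff[OF trans_E Up_subset_E[OF R] ED] by blast
  have "R O (le O ?D) \<subseteq> T"
    using RD by (simp add: Up_relcomp_le[OF R] flip: O_assoc)
  moreover have "R O (?D O le) \<subseteq> T"
    using relcomp_mono[OF RD, of le le] by (simp add: Up_relcomp_le[OF T] O_assoc)
  moreover have "le O ?D \<subseteq> E" and "?D O le \<subseteq> E"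
    using ED le_subset_E by (simp_all add: relcomp_subset_E)
  ultimately have "le O ?D \<subseteq> ?D" and "?D O le \<subseteq> ?D"
    using relcomp_subset_rldiv_iff[OF trans_E Up_subset_E[OF R]] by blast+
  with ED show ?thesis by (simp add: Up_iff)
qed

lemma rrdiv_in_Up:
  assumes S: "S \<in> Up le E" and T: "T \<in> Up le E"
  shows "rrdiv E T S \<in> Up le E"
proof -
  let ?D = "rrdiv E T S"
  have ED: "?D \<subseteq> E" by (rule rrdiv_subset)
  have DS: "?D O S \<subseteq> T"
    using relcomp_subset_rrdiv_iff[OF trans_E ED Up_subset_E[OF S]] by blast
  have "(?D O le) O S \<subseteq> T"
    using DS by (simp add: le_relcomp_Up[OF S] O_assoc)
  moreover have "(le O ?D) O S \<subseteq> T"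
    using relcomp_mono[OF _ DS, of le le] by (simp add: le_relcomp_Up[OF T] O_assoc)
  moreover have "le O ?D \<subseteq> E" and "?D O le \<subseteq> E"
    using ED le_subset_E by (simp_all add: relcomp_subset_E)
  ultimately have "le O ?D \<subseteq> ?D" and "?D O le \<subseteq> ?D"
    using relcomp_subset_rrdiv_iff[OF trans_E _ Up_subset_E[OF S]] by blast+
  with ED show ?thesis by (simp add: Up_iff)
qed

lemma residuated_lattice_Up:
  "residuated_lattice (Up le E) (\<inter>) (\<union>) (O) le (rldiv E) (rrdiv E)"
  unfolding residuated_lattice_def lat_le_inter_iff_subset
proof (intro conjI ballI)
  fix R S T assume R: "R \<in> Up le E" and S: "S \<in> Up le E" and "T \<in> Up le E"
  show "R O S \<subseteq> T \<longleftrightarrow> S \<subseteq> rldiv E R T"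
    by (rule relcomp_subset_rldiv_iff[OF trans_E Up_subset_E[OF R] Up_subset_E[OF S]])
  show "R O S \<subseteq> T \<longleftrightarrow> R \<subseteq> rrdiv E T S"
    by (rule relcomp_subset_rrdiv_iff[OF trans_E Up_subset_E[OF R] Up_subset_E[OF S]])
qed (auto simp: le_in_Up Int_in_Up Un_in_Up relcomp_in_Up rldiv_in_Up rrdiv_in_Up
    le_relcomp_Up Up_relcomp_le O_assoc)

end

locale Dq_frame = preorder_in_equiv X le E
  for X :: "'a set" and le E :: "('a \<times> 'a) set" +
  fixes \<alpha> \<beta> :: "'a \<Rightarrow> 'a"
  assumes alpha_automorphism: "order_automorphism X le \<alpha>"
    and beta_dual_automorphism: "dual_order_automorphism X le \<beta>"
    and beta_involutive: "\<forall>x\<in>X. \<beta> (\<beta> x) = x"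
    and graph_alpha_subset_E: "graph X \<alpha> \<subseteq> E"
    and graph_beta_subset_E: "graph X \<beta> \<subseteq> E"
    and graph_beta_eq: "graph X \<beta> = graph X \<alpha> O graph X \<beta> O graph X \<alpha>"
begin

lemma alpha_in_X [simp]: "x \<in> X \<Longrightarrow> \<alpha> x \<in> X"
  using alpha_automorphism unfolding order_automorphism_def bij_betw_def by blast

lemma beta_in_X [simp]: "x \<in> X \<Longrightarrow> \<beta> x \<in> X"
  using beta_dual_automorphism unfolding dual_order_automorphism_def bij_betw_def by blast

lemma beta_beta [simp]: "x \<in> X \<Longrightarrow> \<beta> (\<beta> x) = x"
  using beta_involutive by blast

lemma alpha_beta_alpha [simp]: "x \<in> X \<Longrightarrow> \<alpha> (\<beta> (\<alpha> x)) = \<beta> x"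
proof -
  assume "x \<in> X"
  then have "(x, \<beta> x) \<in> graph X \<alpha> O graph X \<beta> O graph X \<alpha>"
    unfolding graph_beta_eq[symmetric] by (simp add: in_graph_iff)
  then show ?thesis
    by (simp add: graph_relcomp_iff in_graph_iff)
qed

lemma le_alpha_iff: "x \<in> X \<Longrightarrow> y \<in> X \<Longrightarrow> (\<alpha> x, \<alpha> y) \<in> le \<longleftrightarrow> (x, y) \<in> le"
  using alpha_automorphism unfolding order_automorphism_def by blast

lemma le_beta_iff: "x \<in> X \<Longrightarrow> y \<in> X \<Longrightarrow> (\<beta> x, \<beta> y) \<in> le \<longleftrightarrow> (y, x) \<in> le"
  using beta_dual_automorphism unfolding dual_order_automorphism_def by blast

lemma inv_alpha_eq [simp]: "y \<in> X \<Longrightarrow> inv_into X \<alpha> y = \<beta> (\<alpha> (\<beta> y))"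
proof -
  assume y: "y \<in> X"
  have "inj_on \<alpha> X"
    using alpha_automorphism unfolding order_automorphism_def bij_betw_def by blast
  then have "inv_into X \<alpha> (\<alpha> (\<beta> (\<alpha> (\<beta> y)))) = \<beta> (\<alpha> (\<beta> y))"
    using y by (simp del: alpha_beta_alpha)
  then show ?thesis
    using y by simp
qed

lemma E_self_alpha: "x \<in> X \<Longrightarrow> (x, \<alpha> x) \<in> E"
  using graph_alpha_subset_E unfolding graph_def by blast

lemma E_self_beta: "x \<in> X \<Longrightarrow> (x, \<beta> x) \<in> E"
  using graph_beta_subset_E unfolding graph_def by blast

lemma E_alpha_left [simp]: "x \<in> X \<Longrightarrow> (\<alpha> x, y) \<in> E \<longleftrightarrow> (x, y) \<in> E"
  using E_self_alpha equiv unfolding equiv_def by (meson symD transD)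

lemma E_alpha_right [simp]: "y \<in> X \<Longrightarrow> (x, \<alpha> y) \<in> E \<longleftrightarrow> (x, y) \<in> E"
  using E_self_alpha equiv unfolding equiv_def by (meson symD transD)

lemma E_beta_left [simp]: "x \<in> X \<Longrightarrow> (\<beta> x, y) \<in> E \<longleftrightarrow> (x, y) \<in> E"
  using E_self_beta equiv unfolding equiv_def by (meson symD transD)

lemma E_beta_right [simp]: "y \<in> X \<Longrightarrow> (x, \<beta> y) \<in> E \<longleftrightarrow> (x, y) \<in> E"
  using E_self_beta equiv unfolding equiv_def by (meson symD transD)

lemma Dq_zero_iff: "(x, y) \<in> Dq_zero X le E \<alpha> \<longleftrightarrow> (x, y) \<in> E \<and> (y, \<alpha> x) \<notin> le"
proof -
  have "(x, y) \<in> Dq_zero X le E \<alpha> \<longleftrightarrow> x \<in> X \<and> (y, \<alpha> x) \<in> E \<and> (y, \<alpha> x) \<notin> le"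
    unfolding Dq_zero_def graph_def by blast
  also have "\<dots> \<longleftrightarrow> (x, y) \<in> E \<and> (y, \<alpha> x) \<notin> le"
    using E_in_X[of x y] by (auto simp: E_commute)
  finally show ?thesis .
qed

lemma Dq_tilde_iff:
  assumes R: "R \<in> Up le E"
  shows "(x, y) \<in> Dq_tilde X le E \<alpha> R \<longleftrightarrow> (x, y) \<in> E \<and> (inv_into X \<alpha> y, x) \<notin> R"
proof -
  have "(x, y) \<in> R\<inverse> O (E - Dq_zero X le E \<alpha>) \<longleftrightarrow> (inv_into X \<alpha> y, x) \<in> R"
    if xy: "(x, y) \<in> E"
  proof
    assume "(x, y) \<in> R\<inverse> O (E - Dq_zero X le E \<alpha>)"
    then obtain z where zx: "(z, x) \<in> R" and zy: "(z, y) \<in> E" and "(y, \<alpha> z) \<in> le"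
      by (auto simp: Dq_zero_iff)
    then have "(inv_into X \<alpha> y, z) \<in> le"
      using E_in_X[OF zy] le_alpha_iff[of "inv_into X \<alpha> y" z] by simp
    with zx show "(inv_into X \<alpha> y, x) \<in> R"
      using le_relcomp_Up[OF R] by blast
  next
    assume "(inv_into X \<alpha> y, x) \<in> R"
    moreover have "(inv_into X \<alpha> y, y) \<in> E - Dq_zero X le E \<alpha>"
      using E_in_X[OF xy] by (simp add: Dq_zero_iff refl_le refl_E)
    ultimately show "(x, y) \<in> R\<inverse> O (E - Dq_zero X le E \<alpha>)"
      by blast
  qed
  then show ?thesis
    unfolding Dq_tilde_def rldiv_def by blast
qed

lemma Dq_minus_iff:
  assumes R: "R \<in> Up le E"
  shows "(x, y) \<in> Dq_minus X le E \<alpha> R \<longleftrightarrow> (x, y) \<in> E \<and> (y, \<alpha> x) \<notin> R"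
proof -
  have "(x, y) \<in> (E - Dq_zero X le E \<alpha>) O R\<inverse> \<longleftrightarrow> (y, \<alpha> x) \<in> R"
    if xy: "(x, y) \<in> E"
  proof
    assume "(x, y) \<in> (E - Dq_zero X le E \<alpha>) O R\<inverse>"
    then obtain z where "(z, \<alpha> x) \<in> le" and "(y, z) \<in> R"
      by (auto simp: Dq_zero_iff)
    then show "(y, \<alpha> x) \<in> R"
      using Up_relcomp_le[OF R] by blast
  next
    assume "(y, \<alpha> x) \<in> R"
    moreover have "(x, \<alpha> x) \<in> E - Dq_zero X le E \<alpha>"
      using E_in_X[OF xy] by (simp add: Dq_zero_iff refl_le refl_E)
    ultimately show "(x, y) \<in> (E - Dq_zero X le E \<alpha>) O R\<inverse>"
      by blast
  qed
  then show ?thesis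
    unfolding Dq_minus_def rrdiv_def by blast
qed

lemma Dq_prime_iff:
  "(x, y) \<in> Dq_prime X E \<alpha> \<beta> R \<longleftrightarrow> (x, y) \<in> E \<and> (\<beta> (\<alpha> x), \<beta> y) \<notin> R"
proof -
  have "(x, y) \<in> Dq_prime X E \<alpha> \<beta> R \<longleftrightarrow>
      x \<in> X \<and> (\<exists>w\<in>X. y = \<beta> w \<and> (\<beta> (\<alpha> x), w) \<in> E - R)"
    unfolding Dq_prime_def graph_relcomp_iff relcomp_graph_iff by auto
  also have "\<dots> \<longleftrightarrow> (x, y) \<in> E \<and> (\<beta> (\<alpha> x), \<beta> y) \<notin> R"
  proof
    assume "x \<in> X \<and> (\<exists>w\<in>X. y = \<beta> w \<and> (\<beta> (\<alpha> x), w) \<in> E - R)"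
    then obtain w where "x \<in> X" and "w \<in> X" and "y = \<beta> w" and "(\<beta> (\<alpha> x), w) \<in> E - R"
      by blast
    then show "(x, y) \<in> E \<and> (\<beta> (\<alpha> x), \<beta> y) \<notin> R"
      by simp
  next
    assume xy: "(x, y) \<in> E \<and> (\<beta> (\<alpha> x), \<beta> y) \<notin> R"
    with E_in_X have "x \<in> X" and "y \<in> X"
      by blast+
    with xy show "x \<in> X \<and> (\<exists>w\<in>X. y = \<beta> w \<and> (\<beta> (\<alpha> x), w) \<in> E - R)"
      by (intro conjI bexI[of _ "\<beta> y"]) simp_all
  qed
  finally show ?thesis .
qed

lemma Dq_zero_in_Up: "Dq_zero X le E \<alpha> \<in> Up le E"
proof (rule UpI)
  show "Dq_zero X le E \<alpha> \<subseteq> E"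
    by (auto simp: Dq_zero_iff)
  fix x u v y
  assume xu: "(x, u) \<in> le" and "(u, v) \<in> Dq_zero X le E \<alpha>" and vy: "(v, y) \<in> le"
    and xy: "(x, y) \<in> E"
  then have vu: "(v, \<alpha> u) \<notin> le"
    by (simp add: Dq_zero_iff)
  have "(\<alpha> x, \<alpha> u) \<in> le"
    using xu le_in_X[OF xu] le_alpha_iff by blast
  with vu vy have "(y, \<alpha> x) \<notin> le"
    using trans_le by (meson transD)
  with xy show "(x, y) \<in> Dq_zero X le E \<alpha>"
    by (simp add: Dq_zero_iff)
qed

lemma Dq_tilde_in_Up: "R \<in> Up le E \<Longrightarrow> Dq_tilde X le E \<alpha> R \<in> Up le E"
  unfolding Dq_tilde_def by (rule rldiv_in_Up[OF _ Dq_zero_in_Up])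

lemma Dq_minus_in_Up: "R \<in> Up le E \<Longrightarrow> Dq_minus X le E \<alpha> R \<in> Up le E"
  unfolding Dq_minus_def by (rule rrdiv_in_Up[OF _ Dq_zero_in_Up])

lemma Dq_prime_in_Up:
  assumes R: "R \<in> Up le E"
  shows "Dq_prime X E \<alpha> \<beta> R \<in> Up le E"
proof (rule UpI)
  show "Dq_prime X E \<alpha> \<beta> R \<subseteq> E"
    by (auto simp: Dq_prime_iff)
  fix x u v y
  assume xu: "(x, u) \<in> le" and "(u, v) \<in> Dq_prime X E \<alpha> \<beta> R" and vy: "(v, y) \<in> le"
    and xy: "(x, y) \<in> E"
  then have uv: "(\<beta> (\<alpha> u), \<beta> v) \<notin> R"
    by (simp add: Dq_prime_iff)
  have "(\<beta> (\<alpha> u), \<beta> (\<alpha> x)) \<in> le" and "(\<beta> y, \<beta> v) \<in> le"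
    using xu vy le_in_X[OF xu] le_in_X[OF vy] by (simp_all add: le_alpha_iff le_beta_iff)
  with uv have "(\<beta> (\<alpha> x), \<beta> y) \<notin> R"
    using Up_le_closed[OF R] by blast
  with xy show "(x, y) \<in> Dq_prime X E \<alpha> \<beta> R"
    by (simp add: Dq_prime_iff)
qed

lemma Dq_tilde_Dq_minus:
  "R \<in> Up le E \<Longrightarrow> Dq_tilde X le E \<alpha> (Dq_minus X le E \<alpha> R) = R"
  by (intro subset_E_eqI Up_subset_E Dq_tilde_in_Up Dq_minus_in_Up)
    (simp_all add: Dq_tilde_iff Dq_minus_iff Dq_minus_in_Up E_commute)

lemma Dq_minus_Dq_tilde:
  "R \<in> Up le E \<Longrightarrow> Dq_minus X le E \<alpha> (Dq_tilde X le E \<alpha> R) = R"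
  by (intro subset_E_eqI Up_subset_E Dq_tilde_in_Up Dq_minus_in_Up)
    (simp_all add: Dq_tilde_iff Dq_minus_iff Dq_tilde_in_Up E_commute)

lemma Dq_prime_Dq_prime:
  "R \<in> Up le E \<Longrightarrow> Dq_prime X E \<alpha> \<beta> (Dq_prime X E \<alpha> \<beta> R) = R"
  by (intro subset_E_eqI Up_subset_E Dq_prime_in_Up) (simp_all add: Dq_prime_iff)

lemma Dq_prime_Un:
  "Dq_prime X E \<alpha> \<beta> (R \<union> S) = Dq_prime X E \<alpha> \<beta> R \<inter> Dq_prime X E \<alpha> \<beta> S"
  by (auto simp: Dq_prime_iff)

lemma Dq_minus_Dq_prime_iff:
  assumes "R \<in> Up le E"
  shows "(x, y) \<in> Dq_minus X le E \<alpha> (Dq_prime X E \<alpha> \<beta> R) \<longleftrightarrow>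
    (x, y) \<in> E \<and> (\<beta> (\<alpha> y), \<beta> (\<alpha> x)) \<in> R"
  using E_in_X[of x y]
  by (auto simp: Dq_minus_iff Dq_prime_in_Up assms Dq_prime_iff E_commute)

lemma Dq_prime_Dq_tilde:
  assumes "R \<in> Up le E"
  shows "Dq_prime X E \<alpha> \<beta> (Dq_tilde X le E \<alpha> R) = Dq_minus X le E \<alpha> (Dq_prime X E \<alpha> \<beta> R)"
  using assms
  by (intro subset_E_eqI Up_subset_E Dq_prime_in_Up Dq_tilde_in_Up Dq_minus_in_Up)
    (simp_all add: Dq_prime_iff Dq_tilde_iff Dq_minus_Dq_prime_iff E_commute)

lemma Dq_minus_Dq_prime_relcomp:
  assumes R: "R \<in> Up le E" and S: "S \<in> Up le E"
  shows "Dq_minus X le E \<alpha> (Dq_prime X E \<alpha> \<beta> (R O S)) =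
    Dq_minus X le E \<alpha> (Dq_prime X E \<alpha> \<beta> S) O Dq_minus X le E \<alpha> (Dq_prime X E \<alpha> \<beta> R)"
proof (rule subset_E_eqI)
  let ?m = "\<lambda>T. Dq_minus X le E \<alpha> (Dq_prime X E \<alpha> \<beta> T)"
  have RS: "R O S \<in> Up le E"
    using R S by (rule relcomp_in_Up)
  show "?m (R O S) \<subseteq> E"
    using RS by (intro Up_subset_E Dq_minus_in_Up Dq_prime_in_Up)
  show "?m S O ?m R \<subseteq> E"
    using R S by (intro Up_subset_E relcomp_in_Up Dq_minus_in_Up Dq_prime_in_Up)
  fix x y assume x: "x \<in> X" and y: "y \<in> X" and xy: "(x, y) \<in> E"
  have "(x, y) \<in> ?m (R O S) \<longleftrightarrow> (\<beta> (\<alpha> y), \<beta> (\<alpha> x)) \<in> R O S"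
    using RS xy by (simp add: Dq_minus_Dq_prime_iff)
  also have "\<dots> \<longleftrightarrow> (x, y) \<in> ?m S O ?m R"
  proof
    assume "(\<beta> (\<alpha> y), \<beta> (\<alpha> x)) \<in> R O S"
    then obtain w where yw: "(\<beta> (\<alpha> y), w) \<in> R" and wx: "(w, \<beta> (\<alpha> x)) \<in> S"
      by blast
    have "(y, w) \<in> E" and "(w, x) \<in> E"
      using Up_subset_E[OF R] Up_subset_E[OF S] yw wx x y by auto
    with x y yw wx have "(x, \<beta> (\<alpha> w)) \<in> ?m S" and "(\<beta> (\<alpha> w), y) \<in> ?m R"
      using E_in_X[of y w] R S by (simp_all add: Dq_minus_Dq_prime_iff E_commute)
    then show "(x, y) \<in> ?m S O ?m R"
      by blast
  next
    assume "(x, y) \<in> ?m S O ?m R"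
    then show "(\<beta> (\<alpha> y), \<beta> (\<alpha> x)) \<in> R O S"
      using R S by (auto simp: Dq_minus_Dq_prime_iff)
  qed
  finally show "(x, y) \<in> ?m (R O S) \<longleftrightarrow> (x, y) \<in> ?m S O ?m R" .
qed

lemma Dq_prime_relcomp:
  assumes R: "R \<in> Up le E" and S: "S \<in> Up le E"
  shows "Dq_prime X E \<alpha> \<beta> (R O S) = Dq_tilde X le E \<alpha>
    (Dq_minus X le E \<alpha> (Dq_prime X E \<alpha> \<beta> S) O Dq_minus X le E \<alpha> (Dq_prime X E \<alpha> \<beta> R))"
proof -
  have "Dq_prime X E \<alpha> \<beta> (R O S) \<in> Up le E"
    using R S by (intro Dq_prime_in_Up relcomp_in_Up)
  then have "Dq_prime X E \<alpha> \<beta> (R O S) =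
      Dq_tilde X le E \<alpha> (Dq_minus X le E \<alpha> (Dq_prime X E \<alpha> \<beta> (R O S)))"
    by (rule Dq_tilde_Dq_minus[symmetric])
  then show ?thesis
    by (simp only: Dq_minus_Dq_prime_relcomp[OF R S])
qed

lemma Dq_tilde_eq_Dq_minus:
  assumes "R \<in> Up le E" and "\<forall>x\<in>X. \<alpha> x = x"
  shows "Dq_tilde X le E \<alpha> R = Dq_minus X le E \<alpha> R"
  using assms
  by (intro subset_E_eqI Up_subset_E Dq_tilde_in_Up Dq_minus_in_Up)
    (simp_all add: Dq_tilde_iff Dq_minus_iff)

theorem distributive_qra_Dq:
  "distributive_qra (Up le E) (\<inter>) (\<union>) (O) le (Dq_zero X le E \<alpha>)
     (Dq_tilde X le E \<alpha>) (Dq_minus X le E \<alpha>) (Dq_prime X E \<alpha> \<beta>)"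
  unfolding distributive_qra_def quasi_relation_algebra_def
proof (intro conjI ballI)
  show "\<exists>ldiv rdiv. residuated_lattice (Up le E) (\<inter>) (\<union>) (O) le ldiv rdiv \<and>
      (\<forall>R\<in>Up le E. Dq_tilde X le E \<alpha> R = ldiv R (Dq_zero X le E \<alpha>) \<and>
        Dq_minus X le E \<alpha> R = rdiv (Dq_zero X le E \<alpha>) R)"
    using residuated_lattice_Up unfolding Dq_tilde_def Dq_minus_def by blast
qed (auto simp: Dq_zero_in_Up Dq_tilde_in_Up Dq_minus_in_Up Dq_prime_in_Up Un_in_Up
    Dq_tilde_Dq_minus Dq_minus_Dq_tilde Dq_prime_Dq_prime Dq_prime_Un Dq_prime_Dq_tilde
    Dq_prime_relcomp)

end

theorem theorem3p15:
  fixes X :: "'a set" and le E :: "('a \<times> 'a) set" and \<alpha> \<beta> :: "'a \<Rightarrow> 'a"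
  assumes "partial_order_on X le" and "le \<subseteq> X \<times> X"
    and "equiv X E" and "le \<subseteq> E"
    and "order_automorphism X le \<alpha>"
    and "dual_order_automorphism X le \<beta>"
    and "\<forall>x\<in>X. \<beta> (\<beta> x) = x"
    and "graph X \<alpha> \<subseteq> E" and "graph X \<beta> \<subseteq> E"
    and "graph X \<beta> = graph X \<alpha> O graph X \<beta> O graph X \<alpha>"
  shows "distributive_qra (Up le E) (\<inter>) (\<union>) (O) le (Dq_zero X le E \<alpha>)
           (Dq_tilde X le E \<alpha>) (Dq_minus X le E \<alpha>) (Dq_prime X E \<alpha> \<beta>)
       \<and> ((\<forall>x\<in>X. \<alpha> x = x) \<longrightarrow>
           cyclic_distributive_qra (Up le E) (\<inter>) (\<union>) (O) le (Dq_zero X le E \<alpha>)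
             (Dq_tilde X le E \<alpha>) (Dq_minus X le E \<alpha>) (Dq_prime X E \<alpha> \<beta>))"
proof -
  have "preorder_on X le"
    using assms(1) unfolding partial_order_on_def by blast
  then interpret Dq_frame X le E \<alpha> \<beta>
    using assms by unfold_locales
  show ?thesis
    using distributive_qra_Dq Dq_tilde_eq_Dq_minus unfolding cyclic_distributive_qra_def by blast
qed

end
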